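(* (i) For every finite family $(a_i)_{i\in I}$ in $L$, $|\langle\bigoplus_{i\in I}a_i\rangle_0|\ge|\langle\bigoplus_{i\in I}a_i\rangle_=|\ge|\langle\bigoplus_{i\in I}a_i\rangle^+_-|$, and $|\langle\bigoplus_{i\in I}a_i\rangle^+_-|\le|\langle\bigoplus_{i\in I}a_i\rangle|$ for every computation rule $\langle\cdot\rangle$. (ii) $\mathcal{O}_{\langle\cdot\rangle_0}\subseteq\mathcal{O}_{\langle\cdot\rangle_=}\subseteq\mathcal{O}_{\langle\cdot\rangle^+_-}$.
   Context: Let $(L^+,\le)$ be a totally ordered set with bottom $\mathbb{O}$ and top $\mathbb{1}$. Let $L^-=\{-a:a\in L^+\}$ be a disjoint copy with reversed order, $L=L^+\cup L^-$ with $-\mathbb{O}=\mathbb{O}$, totally ordered with $L^-$ below $L^+$; $-(-a)=a$; $|a|=a$ on $L^+$, $|a|=-a$ on $L^-$. Symmetric maximum: $a\oplus b=\mathbb{O}$ if $b=-a$, otherwise the one of $a,b$ with larger absolute value. A finite family $(a_i)_{i\in I}$ fulfills associativity if $|I|\le2$ or $\bigvee_i a_i\ne-\bigwedge_i a_i$; then $\bigoplus_{i\in I}a_i$ is independent of parenthesization (empty $\oplus$ is $\mathbb{O}$). A computation rule $\langle\cdot\rangle$ assigns to every finite family a set $J\subseteq I$ of deleted indices such that $(a_i)_{i\in I\setminus J}$ fulfills associativity and such that the deletion is the result of a suitable arrangement of parentheses in $\bigoplus_{i\in I}a_i$; $\langle\bigoplus_{i\in I}a_i\rangle:=\bigoplus_{i\in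 I\setminus J}a_i$. The cancelling set $\mathcal{O}_{\langle\cdot\rangle}$ is the set of finite families with $\langle\bigoplus a_i\rangle=\mathbb{O}$. Splitting rule $\langle\cdot\rangle^+_-$: deletes nothing if the family fulfills associativity, everything otherwise. Weak rule $\langle\cdot\rangle_=$: repeatedly deletes all occurrences of $a$ and of $-a$, where $a=\bigvee a_i=-\bigwedge a_i$ in the current family, until associativity holds. Strong rule $\langle\cdot\rangle_0$: repeatedly deletes one occurrence of $a$ and one of $-a$ ($a=\bigvee a_i=-\bigwedge a_i$ in the current family) until associativity holds. *)

theory Defs
  imports Main "HOL-Library.Multiset"
begin

section \<open>The symmetrized chain L = L+ \<union> L-\<close>

text \<open>L+ is modelled by a linearly ordered type 'a with bottom (bot) and top (top).
  Pos a is the element a of L+, Neg a is the element -a of L-.  Since -O = O,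
  the raw value Neg bot is not an element of L; the carrier is Lcar.\<close>

datatype 'a sym = Pos 'a | Neg 'a

definition Lcar :: "('a::order_bot) sym set" where
  "Lcar = {x. x \<noteq> Neg bot}"

fun sym_le :: "('a::linorder) sym \<Rightarrow> 'a sym \<Rightarrow> bool" where
  "sym_le (Neg a) (Neg b) = (b \<le> a)"
| "sym_le (Neg a) (Pos b) = True"
| "sym_le (Pos a) (Neg b) = False"
| "sym_le (Pos a) (Pos b) = (a \<le> b)"

instantiation sym :: (linorder) linorder
begin
definition less_eq_sym_def: "x \<le> y \<longleftrightarrow> sym_le x y"
definition less_sym_def: "(x::'a sym) < y \<longleftrightarrow> sym_le x y \<and> \<not> sym_le y x"
instance
proof
  fix x y z :: "'a sym"
  show "(x < y) = (x \<le> y \<and> \<not> y \<le> x)" by (simp add: less_eq_sym_def less_sym_def)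
  show "x \<le> x" by (cases x) (auto simp: less_eq_sym_def)
  show "x \<le> y \<Longrightarrow> y \<le> z \<Longrightarrow> x \<le> z"
    by (cases x; cases y; cases z) (auto simp: less_eq_sym_def)
  show "x \<le> y \<Longrightarrow> y \<le> x \<Longrightarrow> x = y"
    by (cases x; cases y) (auto simp: less_eq_sym_def)
  show "x \<le> y \<or> y \<le> x"
    by (cases x; cases y) (auto simp: less_eq_sym_def)
qed
end

abbreviation zeroL :: "('a::order_bot) sym" where "zeroL \<equiv> Pos bot"

fun negL :: "('a::order_bot) sym \<Rightarrow> 'a sym" where
  "negL (Pos a) = (if a = bot then Pos bot else Neg a)"
| "negL (Neg a) = Pos a"

fun absL :: "'a sym \<Rightarrow> 'a sym" where
  "absL (Pos a) = Pos a"
| "absL (Neg a) = Pos a"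

definition smax :: "('a::{linorder,order_bot}) sym \<Rightarrow> 'a sym \<Rightarrow> 'a sym" where
  "smax a b = (if b = negL a then zeroL else if absL b \<le> absL a then a else b)"

section \<open>Finite families (as lists), associativity, and the big symmetric maximum\<close>

definition fulfills_assoc :: "('a::{linorder,order_bot}) sym list \<Rightarrow> bool" where
  "fulfills_assoc xs \<longleftrightarrow> length xs \<le> 2 \<or> Max (set xs) \<noteq> negL (Min (set xs))"

text \<open>Big symmetric maximum (meaningful for families fulfilling associativity);
  the empty family gives O.\<close>
definition bigsmax :: "('a::{linorder,order_bot}) sym list \<Rightarrow> 'a sym" where
  "bigsmax xs = foldr smax xs zeroL"

text \<open>Arrangements of parentheses: full binary bracketings of the family
  (in any order of the terms, as the family is unordered).\<close>
datatype 'b btree = Leaf 'b | Node "'b btree" "'b btree"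

fun leaves :: "'b btree \<Rightarrow> 'b list" where
  "leaves (Leaf x) = [x]"
| "leaves (Node l r) = leaves l @ leaves r"

fun evalT :: "('a::{linorder,order_bot}) sym btree \<Rightarrow> 'a sym" where
  "evalT (Leaf x) = x"
| "evalT (Node l r) = smax (evalT l) (evalT r)"

definition bracket_values :: "('a::{linorder,order_bot}) sym list \<Rightarrow> 'a sym set" where
  "bracket_values xs =
     {evalT t | t. mset (leaves t) = mset xs} \<union> (if xs = [] then {zeroL} else {})"

definition kept :: "'b list \<Rightarrow> nat set \<Rightarrow> 'b list" where
  "kept xs J = nths xs ({..<length xs} - J)"

definition comp_rule :: "(('a::{linorder,order_bot}) sym list \<Rightarrow> nat set) \<Rightarrow> bool" where
  "comp_rule R \<longleftrightarrow> (\<forall>xs. set xs \<subseteq> Lcar \<longrightarrow>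
      R xs \<subseteq> {..<length xs} \<and>
      fulfills_assoc (kept xs (R xs)) \<and>
      bigsmax (kept xs (R xs)) \<in> bracket_values xs)"

definition rule_value :: "(('a::{linorder,order_bot}) sym list \<Rightarrow> nat set) \<Rightarrow> 'a sym list \<Rightarrow> 'a sym" where
  "rule_value R xs = bigsmax (kept xs (R xs))"

definition split_rule :: "('a::{linorder,order_bot}) sym list \<Rightarrow> 'a sym" where
  "split_rule xs = (if fulfills_assoc xs then bigsmax xs else zeroL)"

lemma nonassoc_nonempty: "\<not> fulfills_assoc xs \<Longrightarrow> xs \<noteq> []"
  by (auto simp: fulfills_assoc_def)

function weak_rule :: "('a::{linorder,order_bot}) sym list \<Rightarrow> 'a sym" where
  "weak_rule xs = (if fulfills_assoc xs then bigsmax xs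
     else (let a = Max (set xs) in weak_rule (filter (\<lambda>x. x \<noteq> a \<and> x \<noteq> negL a) xs)))"
  by pat_completeness auto
termination
proof (relation "measure length")
  fix xs :: "'a sym list" and a
  assume "\<not> fulfills_assoc xs" "a = Max (set xs)"
  then have "a \<in> set xs" using nonassoc_nonempty[of xs] by (simp add: Max_in)
  then show "(filter (\<lambda>x. x \<noteq> a \<and> x \<noteq> negL a) xs, xs) \<in> measure length"
    by (auto intro: length_filter_less)
qed simp

function strong_rule :: "('a::{linorder,order_bot}) sym list \<Rightarrow> 'a sym" where
  "strong_rule xs = (if fulfills_assoc xs then bigsmax xs
     else (let a = Max (set xs) in strong_rule (remove1 (negL a) (remove1 a xs))))"
  by pat_completeness auto
termination
proof (relation "measure length")
  fix xs :: "'a sym list" and a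
  assume "\<not> fulfills_assoc xs" "a = Max (set xs)"
  then have "a \<in> set xs" using nonassoc_nonempty[of xs] by (simp add: Max_in)
  then have "length (remove1 a xs) < length xs" using length_pos_if_in_set[of a xs] by (simp add: length_remove1)
  moreover have "length (remove1 (negL a) (remove1 a xs)) \<le> length (remove1 a xs)"
    by (simp add: length_remove1 diff_le_mono2)
  ultimately show "(remove1 (negL a) (remove1 a xs), xs) \<in> measure length" by simp
qed simp

definition cancelling_set :: "(('a::{linorder,order_bot}) sym list \<Rightarrow> 'a sym) \<Rightarrow> 'a sym list set" where
  "cancelling_set f = {xs. set xs \<subseteq> Lcar \<and> f xs = zeroL}"

end

theory Submission
  imports Defs
begin

text \<open>On a family fulfilling associativity, either one element is strictly larger in absolute
  value than all others, or the family is a pair \<open>c, -c\<close>; in both cases every arrangement of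
  parentheses gives the same value.  Hence on such families all computation rules agree with the
  splitting rule, which returns O otherwise.

  Where the strong rule deletes one copy of \<open>a\<close> and of \<open>-a\<close>, the weak rule deletes the whole level
  \<open>|a|\<close>, which is the top level of the family.  Deleting the top level of a family never increases
  the absolute value of the weak rule's result, so induction along the strong rule gives
  \<open>|weak| \<le> |strong|\<close>.\<close>

declare weak_rule.simps[simp del] strong_rule.simps[simp del]

fun level :: "'a sym \<Rightarrow> 'a" where
  "level (Pos a) = a"
| "level (Neg a) = a"

lemma absL_le_absL_iff: "absL x \<le> absL y \<longleftrightarrow> level x \<le> level y"
  by (cases x; cases y) (auto simp: less_eq_sym_def)

lemma level_negL: "level (negL x) = level x"
  by (cases x) auto

lemma Lcar_level_bot: "x \<in> Lcar \<Longrightarrow> level x = bot \<Longrightarrow> x = zeroL"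
  by (cases x) (auto simp: Lcar_def)

lemma negL_negL: "x \<in> Lcar \<Longrightarrow> negL (negL x) = x"
  by (cases x) (auto simp: Lcar_def)

lemma le_Pos_level: "level y \<le> c \<Longrightarrow> y \<le> Pos c"
  by (cases y) (auto simp: less_eq_sym_def)

lemma Neg_level_le: "level y \<le> c \<Longrightarrow> Neg c \<le> y"
  by (cases y) (auto simp: less_eq_sym_def)

lemma smax_in: "smax u v \<in> {u, v, zeroL}"
  by (auto simp: smax_def)

lemma bigsmax_in: "bigsmax ys \<in> set ys \<union> {zeroL}"
  unfolding bigsmax_def by (induction ys) (use smax_in in fastforce)+

lemma leaves_not_Nil: "leaves t \<noteq> []"
  by (induction t) auto

lemma length_leaves_pos: "length (leaves t) > 0"
  by (simp add: leaves_not_Nil)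

lemma length_leaves_1: "length (leaves t) = 1 \<Longrightarrow> \<exists>u. t = Leaf u"
proof (cases t)
  case (Node l r)
  moreover assume "length (leaves t) = 1"
  ultimately have "length (leaves l) + length (leaves r) = 1" by simp
  with length_leaves_pos[of l] length_leaves_pos[of r] show ?thesis by linarith
qed simp

lemma length_leaves_2: "length (leaves t) = 2 \<Longrightarrow> \<exists>u v. t = Node (Leaf u) (Leaf v)"
proof (cases t)
  case (Node l r)
  moreover assume "length (leaves t) = 2"
  ultimately have "length (leaves l) + length (leaves r) = 2" by simp
  with length_leaves_pos[of l] length_leaves_pos[of r]
  have "length (leaves l) = 1" "length (leaves r) = 1" by linarith+
  with Node show ?thesis using length_leaves_1 by blast
qed simp

lemma evalT_in: "evalT t \<in> set (leaves t) \<union> {zeroL}"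
proof (induction t)
  case (Node t1 t2)
  then show ?case using smax_in[of "evalT t1" "evalT t2"] by auto
qed simp

lemma weak_rule_in: "weak_rule xs \<in> set xs \<union> {zeroL}"
proof (induction xs rule: weak_rule.induct)
  case (1 xs)
  show ?case
  proof (cases "fulfills_assoc xs")
    case True
    then show ?thesis using bigsmax_in[of xs] by (subst weak_rule.simps) simp
  next
    case False
    then show ?thesis using 1[OF False refl] by (subst weak_rule.simps) (auto simp: Let_def)
  qed
qed

lemma weak_rule_assoc: "fulfills_assoc xs \<Longrightarrow> weak_rule xs = bigsmax xs"
  by (subst weak_rule.simps) simp

lemma weak_rule_Nil: "weak_rule [] = zeroL"
  by (simp add: weak_rule_assoc fulfills_assoc_def bigsmax_def)

lemma strong_rule_assoc: "fulfills_assoc xs \<Longrightarrow> strong_rule xs = bigsmax xs"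
  by (subst strong_rule.simps) simp

lemma strong_rule_nonassoc:
  "\<not> fulfills_assoc xs \<Longrightarrow>
     strong_rule xs = strong_rule (remove1 (negL (Max (set xs))) (remove1 (Max (set xs)) xs))"
  by (subst strong_rule.simps) (simp add: Let_def)

definition dominates :: "'a::linorder sym \<Rightarrow> 'a sym set \<Rightarrow> bool" where
  "dominates x S \<longleftrightarrow> (\<forall>y\<in>S. level y \<le> level x \<and> (level y = level x \<longrightarrow> y = x))"

lemma smax_dominates:
  assumes "x \<in> Lcar" "S \<subseteq> Lcar" "dominates x S" "v \<in> S \<union> {zeroL}"
  shows "smax x v = x" "smax v x = x"
proof -
  have le: "level v \<le> level x" and eq: "level v = level x \<Longrightarrow> v = x"
    using assms Lcar_level_bot[OF assms(1)] by (auto simp: dominates_def)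
  have "x = negL x \<Longrightarrow> x = zeroL"
    by (cases x) (auto split: if_splits)
  then show "smax x v = x" "smax v x = x"
    using le eq level_negL[of x] level_negL[of v] by (auto simp: smax_def absL_le_absL_iff)
qed

lemma bigsmax_dominates:
  assumes "x \<in> set ys" "set ys \<subseteq> Lcar" "dominates x (set ys)"
  shows "bigsmax ys = x"
proof -
  have "foldr smax zs zeroL = x" if "x \<in> set zs" "set zs \<subseteq> set ys" for zs
    using that
  proof (induction zs)
    case (Cons z zs)
    have x: "x \<in> Lcar" using assms by auto
    show ?case
    proof (cases "x \<in> set zs")
      case True
      with Cons smax_dominates(2)[OF x assms(2,3), of z] show ?thesis by simp
    next
      case False
      with Cons bigsmax_in[of zs] smax_dominates(1)[OF x assms(2,3)] show ?thesis
        by (auto simp: bigsmax_def)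
    qed
  qed simp
  with assms(1) show ?thesis by (simp add: bigsmax_def)
qed

lemma evalT_dominates:
  assumes "x \<in> set (leaves t)" "set (leaves t) \<subseteq> S" "x \<in> Lcar" "S \<subseteq> Lcar" "dominates x S"
  shows "evalT t = x"
  using assms(1,2)
proof (induction t)
  case (Node l r)
  show ?case
  proof (cases "x \<in> set (leaves l)")
    case True
    with Node evalT_in[of r] smax_dominates(1)[OF assms(3,4,5)] show ?thesis by auto
  next
    case False
    with Node evalT_in[of l] smax_dominates(2)[OF assms(3,4,5)] show ?thesis by auto
  qed
qed simp

lemma top_level_cases:
  assumes "set ys \<subseteq> Lcar" "\<forall>y\<in>set ys. level y \<le> c" "y0 \<in> set ys" "level y0 = c"
  obtains x where "x \<in> set ys" "dominates x (set ys)" "level x = c"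
  | "c \<noteq> bot" "Pos c \<in> set ys" "Neg c \<in> set ys"
proof (cases "c \<noteq> bot \<and> Pos c \<in> set ys \<and> Neg c \<in> set ys")
  case False
  have sign: "y = Pos (level y) \<or> y = Neg (level y)" for y :: "'a sym"
    by (cases y) auto
  have "y0 = Pos c \<or> y0 = Neg c" using assms(4) sign by metis
  then consider "Pos c \<in> set ys" | "Pos c \<notin> set ys" "Neg c \<in> set ys"
    using assms(3) by blast
  then show ?thesis
  proof cases
    case 1
    have "dominates (Pos c) (set ys)"
      unfolding dominates_def
    proof
      fix y assume y: "y \<in> set ys"
      then have "y \<noteq> Neg bot" using assms(1) by (auto simp: Lcar_def)
      then show "level y \<le> level (Pos c) \<and> (level y = level (Pos c) \<longrightarrow> y = Pos c)"
        using assms(2) y False 1 sign[of y] by auto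
    qed
    with 1 that(1) show ?thesis by simp
  next
    case 2
    have "dominates (Neg c) (set ys)"
      unfolding dominates_def
    proof
      fix y assume "y \<in> set ys"
      then show "level y \<le> level (Neg c) \<and> (level y = level (Neg c) \<longrightarrow> y = Neg c)"
        using assms(2) 2 sign[of y] by auto
    qed
    with 2 that(1) show ?thesis by simp
  qed
qed (use that(2) in blast)

lemma both_signs_top_level:
  assumes "\<forall>y\<in>set ys. level y \<le> c" "Pos c \<in> set ys" "Neg c \<in> set ys" "c \<noteq> bot"
  shows "\<not> fulfills_assoc ys \<or> (set ys = {Pos c, Neg c} \<and> length ys = 2)"
proof -
  have "Max (set ys) = Pos c"
    by (rule Max_eqI) (use assms le_Pos_level in auto)
  moreover have "Min (set ys) = Neg c"
    by (rule Min_eqI) (use assms Neg_level_le in auto)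
  moreover have sub: "{Pos c, Neg c} \<subseteq> set ys" using assms by auto
  then have "length ys \<ge> 2"
    using card_mono[OF finite_set sub] card_length[of ys] by simp
  moreover have "length ys \<le> 2 \<Longrightarrow> set ys = {Pos c, Neg c}"
    using card_subset_eq[OF finite_set sub] card_mono[OF finite_set sub] card_length[of ys]
    by simp
  ultimately show ?thesis using assms(4) by (auto simp: fulfills_assoc_def)
qed

lemma opposite_pair_cancels:
  assumes "c \<noteq> bot" "set [u, v] = {Pos c, Neg c}"
  shows "smax u v = zeroL" "bigsmax [u, v] = zeroL"
proof -
  have "(u = Pos c \<and> v = Neg c) \<or> (u = Neg c \<and> v = Pos c)"
    using assms(2) by (auto simp: doubleton_eq_iff)
  then show "smax u v = zeroL" "bigsmax [u, v] = zeroL"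
    using assms(1) by (auto simp: smax_def bigsmax_def less_eq_sym_def)
qed

lemma bracket_value_assoc:
  assumes L: "set xs \<subseteq> Lcar" and A: "fulfills_assoc xs" and w: "w \<in> bracket_values xs"
  shows "w = bigsmax xs"
proof (cases "xs = []")
  case True
  then show ?thesis using w leaves_not_Nil by (auto simp: bracket_values_def bigsmax_def)
next
  case False
  then obtain t where t: "mset (leaves t) = mset xs" "w = evalT t"
    using w by (auto simp: bracket_values_def)
  have leaves: "set (leaves t) = set xs" using t(1) by (metis set_mset_mset)
  define c where "c = Max (level ` set xs)"
  have bound: "\<forall>y\<in>set xs. level y \<le> c" unfolding c_def by simp
  have "c \<in> level ` set xs" unfolding c_def using False by (intro Max_in) auto
  then obtain y0 where y0: "y0 \<in> set xs" "level y0 = c" by blast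
  from L bound y0 show ?thesis
  proof (cases rule: top_level_cases)
    case (1 x)
    then have "x \<in> Lcar" using L by auto
    then have "evalT t = x" using 1 L leaves evalT_dominates[of x t "set xs"] by simp
    moreover have "bigsmax xs = x" using 1 L bigsmax_dominates by blast
    ultimately show ?thesis using t(2) by simp
  next
    case 2
    then have set_xs: "set xs = {Pos c, Neg c}" and len: "length xs = 2"
      using both_signs_top_level[OF bound] A by auto
    then obtain p q where xs: "xs = [p, q]"
      by (auto simp: numeral_2_eq_2 length_Suc_conv)
    have "length (leaves t) = 2" using t(1) len by (metis size_mset)
    then obtain u v where t_uv: "t = Node (Leaf u) (Leaf v)" using length_leaves_2 by blast
    have "evalT t = zeroL"
      using opposite_pair_cancels(1)[OF 2(1), of u v] leaves set_xs t_uv by simp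
    moreover have "bigsmax xs = zeroL"
      using opposite_pair_cancels(2)[OF 2(1), of p q] set_xs xs by simp
    ultimately show ?thesis using t(2) by simp
  qed
qed

lemma nonassoc_level_le_Max:
  assumes "set xs \<subseteq> Lcar" "\<not> fulfills_assoc xs" "x \<in> set xs"
  shows "level x \<le> level (Max (set xs))"
proof -
  have "xs \<noteq> []" using assms(3) by auto
  then have "Min (set xs) \<in> Lcar" using assms(1) Min_in[of "set xs"] by auto
  moreover have "Max (set xs) = negL (Min (set xs))"
    using assms(2) by (auto simp: fulfills_assoc_def)
  ultimately have m: "Min (set xs) = negL (Max (set xs))" by (simp add: negL_negL)
  have "x \<le> Max (set xs)" "Min (set xs) \<le> x" using assms(3) by simp_all
  moreover have "x \<noteq> Neg bot" using assms by (auto simp: Lcar_def)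
  ultimately show ?thesis using m
    by (cases x; cases "Max (set xs)") (auto simp: less_eq_sym_def split: if_splits)
qed

definition drop_level :: "'a \<Rightarrow> 'a sym list \<Rightarrow> 'a sym list" where
  "drop_level c ys = filter (\<lambda>y. level y \<noteq> c) ys"

lemma drop_level_remove1: "level z = c \<Longrightarrow> drop_level c (remove1 z ys) = drop_level c ys"
  by (induction ys) (auto simp: drop_level_def)

lemma weak_rule_nonassoc:
  assumes "set xs \<subseteq> Lcar" "\<not> fulfills_assoc xs"
  shows "weak_rule xs = weak_rule (drop_level (level (Max (set xs))) xs)"
proof -
  have "(y \<noteq> a \<and> y \<noteq> negL a) \<longleftrightarrow> level y \<noteq> level a" if "y \<in> set xs" for y a
  proof -
    have "y \<noteq> Neg bot" using that assms(1) by (auto simp: Lcar_def)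
    then show ?thesis by (cases y; cases a) auto
  qed
  then have "filter (\<lambda>y. y \<noteq> a \<and> y \<noteq> negL a) xs = drop_level (level a) xs" for a
    unfolding drop_level_def by (rule filter_cong[OF refl])
  then show ?thesis
    using assms(2) by (subst weak_rule.simps) (simp add: Let_def)
qed

lemma level_weak_rule_drop_top_level:
  assumes L: "set ys \<subseteq> Lcar" and bound: "\<forall>y\<in>set ys. level y \<le> c"
  shows "level (weak_rule (drop_level c ys)) \<le> level (weak_rule ys)"
proof (cases "\<exists>y0\<in>set ys. level y0 = c")
  case False
  then have "drop_level c ys = ys" by (auto simp: drop_level_def)
  then show ?thesis by simp
next
  case True
  then obtain y0 where y0: "y0 \<in> set ys" "level y0 = c" by blast
  show ?thesis
  proof (cases "fulfills_assoc ys")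
    case False
    have "level (Max (set ys)) = c"
      using nonassoc_level_le_Max[OF L False y0(1)] bound Max_in[of "set ys"] y0 by fastforce
    then show ?thesis using weak_rule_nonassoc[OF L False] by simp
  next
    case A: True
    from L bound y0 show ?thesis
    proof (cases rule: top_level_cases)
      case (1 x)
      have "level (weak_rule (drop_level c ys)) \<le> c"
        using weak_rule_in[of "drop_level c ys"] bound by (auto simp: drop_level_def)
      moreover have "weak_rule ys = x"
        using weak_rule_assoc[OF A] bigsmax_dominates[OF 1(1) L 1(2)] by simp
      ultimately show ?thesis using 1(3) by simp
    next
      case 2
      then have "set ys = {Pos c, Neg c}" using both_signs_top_level[OF bound] A by auto
      then have "drop_level c ys = []" by (auto simp: drop_level_def filter_empty_conv)
      then show ?thesis by (simp add: weak_rule_Nil)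
    qed
  qed
qed

lemma level_weak_rule_le_strong_rule:
  "set xs \<subseteq> Lcar \<Longrightarrow> level (weak_rule xs) \<le> level (strong_rule xs)"
proof (induction xs rule: strong_rule.induct)
  case (1 xs)
  show ?case
  proof (cases "fulfills_assoc xs")
    case True
    then show ?thesis by (simp add: weak_rule_assoc strong_rule_assoc)
  next
    case False
    let ?a = "Max (set xs)"
    let ?ys = "remove1 (negL ?a) (remove1 ?a xs)"
    have ys: "set ?ys \<subseteq> set xs" using set_remove1_subset by (metis order_trans)
    then have L: "set ?ys \<subseteq> Lcar" using 1(2) by blast
    have bound: "\<forall>y\<in>set ?ys. level y \<le> level ?a"
      using nonassoc_level_le_Max[OF 1(2) False] ys by blast
    have "weak_rule xs = weak_rule (drop_level (level ?a) ?ys)"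
      using weak_rule_nonassoc[OF 1(2) False] by (simp add: drop_level_remove1 level_negL)
    then have "level (weak_rule xs) \<le> level (weak_rule ?ys)"
      using level_weak_rule_drop_top_level[OF L bound] by simp
    also have "\<dots> \<le> level (strong_rule ?ys)" using 1(1)[OF False refl L] .
    finally show ?thesis using strong_rule_nonassoc[OF False] by simp
  qed
qed

theorem corollary1:
  fixes dummy :: "'a::{linorder,order_bot,order_top}"
  shows "(\<forall>xs :: 'a sym list. set xs \<subseteq> Lcar \<longrightarrow>
            absL (weak_rule xs) \<le> absL (strong_rule xs) \<and>
            absL (split_rule xs) \<le> absL (weak_rule xs) \<and>
            (\<forall>R. comp_rule R \<longrightarrow> absL (split_rule xs) \<le> absL (rule_value R xs)))
       \<and> cancelling_set (strong_rule :: 'a sym list \<Rightarrow> 'a sym) \<subseteq> cancelling_set weak_rule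
       \<and> cancelling_set (weak_rule :: 'a sym list \<Rightarrow> 'a sym) \<subseteq> cancelling_set split_rule"
proof (intro conjI allI impI subsetI)
  fix xs :: "'a sym list" assume L: "set xs \<subseteq> Lcar"
  show "absL (weak_rule xs) \<le> absL (strong_rule xs)"
    using level_weak_rule_le_strong_rule[OF L] by (simp add: absL_le_absL_iff)
  show "absL (split_rule xs) \<le> absL (weak_rule xs)"
    by (simp add: split_rule_def weak_rule_assoc absL_le_absL_iff)
  fix R :: "'a sym list \<Rightarrow> nat set" assume "comp_rule R"
  then have "rule_value R xs \<in> bracket_values xs"
    using L by (simp add: comp_rule_def rule_value_def)
  then have "fulfills_assoc xs \<Longrightarrow> rule_value R xs = bigsmax xs"
    using L bracket_value_assoc by blast
  then show "absL (split_rule xs) \<le> absL (rule_value R xs)"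
    by (simp add: split_rule_def absL_le_absL_iff)
next
  fix xs :: "'a sym list" assume "xs \<in> cancelling_set strong_rule"
  then have L: "set xs \<subseteq> Lcar" and "strong_rule xs = zeroL" by (auto simp: cancelling_set_def)
  then have "level (weak_rule xs) = bot"
    using level_weak_rule_le_strong_rule[OF L] by (simp add: bot_unique)
  moreover have "weak_rule xs \<in> Lcar" using weak_rule_in[of xs] L by (auto simp: Lcar_def)
  ultimately show "xs \<in> cancelling_set weak_rule"
    using L Lcar_level_bot by (simp add: cancelling_set_def)
next
  fix xs :: "'a sym list" assume "xs \<in> cancelling_set weak_rule"
  then show "xs \<in> cancelling_set split_rule"
    by (cases "fulfills_assoc xs") (simp_all add: cancelling_set_def split_rule_def weak_rule_assoc)
qed

end
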